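(* Let $t:\Sigma^*\to\Omega^*$ be a partial function with suffix-closed domain. If $X\subseteq\mathrm{dom}(t)$ contains a linear fooling set for $t$, then the $\overleftarrow{t}$-growth of $X$ is exponential.
   Context: The suffix expansion $\overleftarrow{t}$ maps $a_1\cdots a_n\in\mathrm{dom}(t)$ to the sequence $(t(a_1\cdots a_n),t(a_2\cdots a_n),\dots,t(a_n))$. The $\overleftarrow{t}$-growth of $X$ is $n\mapsto|\overleftarrow{t}(X\cap\Sigma^{\le n})|$; exponential means $\ge c^n$ for some $c>1$ and infinitely many $n$. A linear fooling scheme for $t$ is $(u_2,v_2,u,v,Z)$ with $u_2,v_2,u,v\in\Sigma^*$, $Z\subseteq\Sigma^*$, $u_2$ a suffix of $u$, $v_2$ a suffix of $v$, $|u_2|=|v_2|$, $\{u_2,v_2\}\{u,v\}^*Z\subseteq\mathrm{dom}(t)$, and for every $n\in\mathbb N$ there is $z_n\in Z$ with $|z_n|\in O(n)$ and $t(u_2wz_n)\neq t(v_2wz_n)$ for all $w\in\{u,v\}^{\le n}$. The set $\{u_2,v_2\}\{u,v\}^*Z$ is a linear fooling set for $t$; $X$ contains one if some linear fooling set is a subset of $X$. *)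

theory Defs
  imports Main "HOL-Library.Sublist" "HOL-Library.Landau_Symbols"
begin

definition suffix_closed_dom :: "('a list \<Rightarrow> 'b list option) \<Rightarrow> bool" where
  "suffix_closed_dom t \<longleftrightarrow> (\<forall>w \<in> dom t. \<forall>s. suffix s w \<longrightarrow> s \<in> dom t)"

definition suffix_expansion :: "('a list \<Rightarrow> 'b list option) \<Rightarrow> 'a list \<Rightarrow> 'b list list" where
  "suffix_expansion t w = map (\<lambda>i. the (t (drop i w))) [0..<length w]"

definition growth :: "('a list \<Rightarrow> 'b list option) \<Rightarrow> 'a list set \<Rightarrow> nat \<Rightarrow> nat" where
  "growth t X n = card (suffix_expansion t ` (X \<inter> {w. length w \<le> n}))"

definition exponential :: "(nat \<Rightarrow> nat) \<Rightarrow> bool" where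
  "exponential f \<longleftrightarrow> (\<exists>c::real. c > 1 \<and> (\<exists>\<^sub>\<infinity>n. real (f n) \<ge> c ^ n))"

definition star_words :: "'a list set \<Rightarrow> 'a list set" where
  "star_words A = {concat ws | ws. set ws \<subseteq> A}"

definition pow_le :: "'a list set \<Rightarrow> nat \<Rightarrow> 'a list set" where
  "pow_le A n = {concat ws | ws. set ws \<subseteq> A \<and> length ws \<le> n}"

definition fooling_set :: "'a list \<Rightarrow> 'a list \<Rightarrow> 'a list \<Rightarrow> 'a list \<Rightarrow> 'a list set \<Rightarrow> 'a list set" where
  "fooling_set u2 v2 u v Z = {x @ w @ z | x w z. x \<in> {u2, v2} \<and> w \<in> star_words {u, v} \<and> z \<in> Z}"

definition linear_fooling_scheme ::
  "('a list \<Rightarrow> 'b list option) \<Rightarrow> 'a list \<Rightarrow> 'a list \<Rightarrow> 'a list \<Rightarrow> 'a list \<Rightarrow> 'a list set \<Rightarrow> bool" where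
  "linear_fooling_scheme t u2 v2 u v Z \<longleftrightarrow>
     suffix u2 u \<and> suffix v2 v \<and> length u2 = length v2 \<and>
     fooling_set u2 v2 u v Z \<subseteq> dom t \<and>
     (\<exists>zs :: nat \<Rightarrow> 'a list.
        (\<forall>n. zs n \<in> Z) \<and>
        (\<lambda>n. real (length (zs n))) \<in> O(\<lambda>n. real n) \<and>
        (\<forall>n. \<forall>w \<in> pow_le {u, v} n. t (u2 @ w @ zs n) \<noteq> t (v2 @ w @ zs n)))"

definition contains_linear_fooling_set ::
  "('a list \<Rightarrow> 'b list option) \<Rightarrow> 'a list set \<Rightarrow> bool" where
  "contains_linear_fooling_set t X \<longleftrightarrow>
     (\<exists>u2 v2 u v Z. linear_fooling_scheme t u2 v2 u v Z \<and> fooling_set u2 v2 u v Z \<subseteq> X)"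

end

theory Submission
  imports Defs "HOL-Library.Infinite_Set"
begin

text \<open>Encode each bit string bs of length n as the word w_bs \<in> {u,v}^n. For distinct bs, bs'
  look at the last position where they differ: there w_bs and w_bs' continue with the same
  word x \<in> {u,v}^{<n}, and since u2, v2 are equally long suffixes of u, v, the words
  u2 w_bs z_n and u2 w_bs' z_n have the suffixes u2 x z_n and v2 x z_n (in some order) at the
  same position. The fooling property separates these, so the suffix expansions of the 2^n
  words differ. As these words have length O(n), the growth at M n is at least 2^n.\<close>

lemma same_length_neq_last_difference:
  assumes "length xs = length ys" "xs \<noteq> ys"
  obtains p p' b b' c where "xs = p @ b # c" "ys = p' @ b' # c" "b \<noteq> b'"
  using assms
proof (induction xs ys arbitrary: thesis rule: list_induct2)
  case (Cons x xs y ys)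
  show ?case
  proof (cases "xs = ys")
    case True
    with Cons.prems(2) show ?thesis by (intro Cons.prems(1)[of "[]" x xs "[]" y]) auto
  next
    case False
    then obtain p p' b b' c where "xs = p @ b # c" "ys = p' @ b' # c" "b \<noteq> b'"
      using Cons.IH by blast
    then show ?thesis by (intro Cons.prems(1)[of "x # p" b c "y # p'" b']) auto
  qed
qed simp

lemma suffix_expansion_eq_imp_the_eq:
  assumes "suffix_expansion t (p @ x) = suffix_expansion t (p' @ x')"
    and "length x = length x'" "x \<noteq> []"
  shows "the (t x) = the (t x')"
proof -
  have "length p = length p'"
    using arg_cong[OF assms(1), of length] assms(2) by (simp add: suffix_expansion_def)
  moreover have "suffix_expansion t (p @ x) ! length p = the (t x)"
    using assms(3) by (simp add: suffix_expansion_def nth_append)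
  moreover have "x' \<noteq> []"
    using assms(2,3) by auto
  then have "suffix_expansion t (p' @ x') ! length p' = the (t x')"
    by (simp add: suffix_expansion_def nth_append)
  ultimately show ?thesis using assms(1) by simp
qed

definition encode :: "'a list \<Rightarrow> 'a list \<Rightarrow> bool list \<Rightarrow> 'a list" where
  "encode u v bs = concat (map (\<lambda>b. if b then u else v) bs)"

lemma encode_append: "encode u v (xs @ ys) = encode u v xs @ encode u v ys"
  by (simp add: encode_def)

lemma encode_Cons: "encode u v (b # bs) = (if b then u else v) @ encode u v bs"
  by (simp add: encode_def)

lemma encode_in_pow_le: "length bs \<le> n \<Longrightarrow> encode u v bs \<in> pow_le {u, v} n"
  unfolding encode_def pow_le_def by (intro CollectI exI[of _ "map (\<lambda>b. if b then u else v) bs"]) auto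

lemma encode_in_star_words: "encode u v bs \<in> star_words {u, v}"
  unfolding encode_def star_words_def by (intro CollectI exI[of _ "map (\<lambda>b. if b then u else v) bs"]) auto

lemma length_encode_le: "length (encode u v bs) \<le> length bs * (length u + length v)"
  by (induction bs) (auto simp: encode_def)

lemma suffix_expansion_encode_inj:
  assumes "suffix u2 u" "suffix v2 v" "length u2 = length v2"
    and "fooling_set u2 v2 u v Z \<subseteq> dom t" "z \<in> Z"
    and fool: "\<forall>w \<in> pow_le {u, v} n. t (u2 @ w @ z) \<noteq> t (v2 @ w @ z)"
    and "length bs = n" "length bs' = n" "bs \<noteq> bs'"
  shows "suffix_expansion t (u2 @ encode u v bs @ z) \<noteq> suffix_expansion t (u2 @ encode u v bs' @ z)"
proof
  assume eq: "suffix_expansion t (u2 @ encode u v bs @ z) = suffix_expansion t (u2 @ encode u v bs' @ z)"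
  obtain p p' b b' c where split: "bs = p @ b # c" "bs' = p' @ b' # c" "b \<noteq> b'"
    by (rule same_length_neq_last_difference[of bs bs']) (use assms(7-9) in simp_all)
  define tail where "tail = (\<lambda>b. if b then u2 else v2)"
  define x where "x = encode u v c @ z"
  have block: "\<exists>q. (if b then u else v) = q @ tail b" for b
    using assms(1,2) unfolding suffix_def tail_def by auto
  obtain q q' where q: "(if b then u else v) = q @ tail b" "(if b' then u else v) = q' @ tail b'"
    using block[of b] block[of b'] by blast
  have "[] \<in> pow_le {u, v} n"
    unfolding pow_le_def by (auto intro!: exI[of _ "[]"])
  with fool have "u2 \<noteq> v2" by auto
  then have "tail b @ x \<noteq> []" "length (tail b @ x) = length (tail b' @ x)"
    using assms(3) by (auto simp: tail_def)
  moreover have "u2 @ encode u v bs @ z = (u2 @ encode u v p @ q) @ tail b @ x"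
    "u2 @ encode u v bs' @ z = (u2 @ encode u v p' @ q') @ tail b' @ x"
    using q by (simp_all add: split x_def encode_append encode_Cons)
  with eq have "suffix_expansion t ((u2 @ encode u v p @ q) @ tail b @ x)
      = suffix_expansion t ((u2 @ encode u v p' @ q') @ tail b' @ x)"
    by simp
  ultimately have "the (t (tail b @ x)) = the (t (tail b' @ x))"
    by (intro suffix_expansion_eq_imp_the_eq)
  moreover have "tail b @ x \<in> dom t" "tail b' @ x \<in> dom t"
    using assms(4,5) encode_in_star_words[of u v c]
    unfolding fooling_set_def x_def tail_def by (auto 6 0)
  moreover have "t (u2 @ x) \<noteq> t (v2 @ x)"
    using fool encode_in_pow_le[of c n u v] split(1) assms(7) by (simp add: x_def)
  then have "t (tail b @ x) \<noteq> t (tail b' @ x)"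
    using \<open>b \<noteq> b'\<close> by (cases b) (auto simp: tail_def)
  ultimately show False by auto
qed

lemma growth_ge_pow2:
  fixes t :: "'a::finite list \<Rightarrow> 'b list option"
  assumes "suffix u2 u" "suffix v2 v" "length u2 = length v2"
    and "fooling_set u2 v2 u v Z \<subseteq> dom t" "z \<in> Z"
    and "\<forall>w \<in> pow_le {u, v} n. t (u2 @ w @ z) \<noteq> t (v2 @ w @ z)"
    and "fooling_set u2 v2 u v Z \<subseteq> X"
    and "length u2 + n * (length u + length v) + length z \<le> N"
  shows "2 ^ n \<le> growth t X N"
proof -
  define S where "S = {bs :: bool list. set bs \<subseteq> UNIV \<and> length bs = n}"
  define f where "f = (\<lambda>bs. suffix_expansion t (u2 @ encode u v bs @ z))"
  have "card S = 2 ^ n"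
    unfolding S_def using card_lists_length_eq[of "UNIV :: bool set" n] by simp
  moreover have "inj_on f S"
    unfolding inj_on_def S_def f_def using suffix_expansion_encode_inj[OF assms(1-6)] by blast
  moreover have "finite (X \<inter> {w. length w \<le> N})"
    by (rule rev_finite_subset[OF finite_lists_length_le[of "UNIV :: 'a set" N]]) auto
  moreover have "f ` S \<subseteq> suffix_expansion t ` (X \<inter> {w. length w \<le> N})"
  proof
    fix y assume "y \<in> f ` S"
    then obtain bs where bs: "length bs = n" "y = f bs" unfolding S_def by auto
    have "u2 @ encode u v bs @ z \<in> X"
      using assms(5,7) encode_in_star_words[of u v bs] unfolding fooling_set_def by blast
    moreover have "length (u2 @ encode u v bs @ z) \<le> N"
      using length_encode_le[of u v bs] bs assms(8) by simp
    ultimately show "y \<in> suffix_expansion t ` (X \<inter> {w. length w \<le> N})"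
      using bs unfolding f_def by blast
  qed
  ultimately show ?thesis
    unfolding growth_def using card_mono[OF finite_imageI] card_image by metis
qed

lemma exponential_if_pow2_le_linear:
  fixes g :: "nat \<Rightarrow> nat" and M :: nat
  assumes "M > 0" and "eventually (\<lambda>n. 2 ^ n \<le> g (M * n)) sequentially"
  shows "exponential g"
proof -
  obtain n0 where n0: "\<And>n. n \<ge> n0 \<Longrightarrow> 2 ^ n \<le> g (M * n)"
    using assms(2) unfolding eventually_sequentially by blast
  define c :: real where "c = 2 powr (1 / real M)"
  have c_pow: "c ^ (M * n) = 2 ^ n" for n
    using assms(1) by (simp add: c_def power_mult powr_power)
  have "\<exists>\<^sub>\<infinity>N. real (g N) \<ge> c ^ N"
    unfolding INFM_nat
  proof
    fix m
    define n where "n = m + n0 + 1"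
    have "n \<le> M * n" using assms(1) by simp
    then have "m < M * n" by (simp add: n_def)
    moreover have "real (2 ^ n) \<le> real (g (M * n))"
      using n0[of n] by (simp only: of_nat_le_iff n_def)
    then have "c ^ (M * n) \<le> real (g (M * n))"
      by (simp add: c_pow)
    ultimately show "\<exists>N>m. c ^ N \<le> real (g N)" by blast
  qed
  moreover have "c > 1"
    using assms(1) by (simp add: c_def)
  ultimately show ?thesis unfolding exponential_def by blast
qed

lemma bigO_linear_imp_le_mult:
  assumes "(\<lambda>n. real (f n)) \<in> O(\<lambda>n. real n)"
  obtains K :: nat where "eventually (\<lambda>n. f n \<le> K * n) sequentially"
proof -
  obtain c where "eventually (\<lambda>n. norm (real (f n)) \<le> c * norm (real n)) sequentially"
    using assms by (elim landau_o.bigE)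
  then have "eventually (\<lambda>n. f n \<le> nat \<lceil>c\<rceil> * n) sequentially"
  proof (rule eventually_mono)
    fix n assume "norm (real (f n)) \<le> c * norm (real n)"
    then have "real (f n) \<le> c * real n" by simp
    also have "\<dots> \<le> real (nat \<lceil>c\<rceil>) * real n"
      by (intro mult_right_mono) (auto, linarith)
    finally show "f n \<le> nat \<lceil>c\<rceil> * n"
      by (simp only: of_nat_mult [symmetric] of_nat_le_iff)
  qed
  then show thesis by (rule that)
qed

theorem proposition5:
  fixes t :: "'a::finite list \<Rightarrow> 'b list option" and X :: "'a list set"
  assumes "suffix_closed_dom t"
    and "X \<subseteq> dom t"
    and "contains_linear_fooling_set t X"
  shows "exponential (growth t X)"
proof -
  obtain u2 v2 u v Z zs where fX: "fooling_set u2 v2 u v Z \<subseteq> X"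
    and scheme: "suffix u2 u" "suffix v2 v" "length u2 = length v2" "fooling_set u2 v2 u v Z \<subseteq> dom t"
    and zs: "\<And>n. zs n \<in> Z" "(\<lambda>n. real (length (zs n))) \<in> O(\<lambda>n. real n)"
      "\<And>n. \<forall>w \<in> pow_le {u, v} n. t (u2 @ w @ zs n) \<noteq> t (v2 @ w @ zs n)"
    using assms(3) unfolding contains_linear_fooling_set_def linear_fooling_scheme_def by blast
  obtain K where K: "eventually (\<lambda>n. length (zs n) \<le> K * n) sequentially"
    using bigO_linear_imp_le_mult[OF zs(2)] .
  define M where "M = length u2 + length u + length v + K"
  have "eventually (\<lambda>n. 2 ^ n \<le> growth t X (Suc M * n)) sequentially"
    using K eventually_ge_at_top[of 1]
  proof eventually_elim
    case (elim n)
    have "length u2 \<le> n * length u2" using elim(2) by simp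
    moreover have "Suc M * n = n + n * length u2 + n * length u + n * length v + K * n"
      by (simp add: M_def algebra_simps)
    ultimately have "length u2 + n * (length u + length v) + length (zs n) \<le> Suc M * n"
      using elim(1) unfolding distrib_left by linarith
    then show ?case using growth_ge_pow2[OF scheme zs(1,3) fX] by blast
  qed
  then show ?thesis by (rule exponential_if_pow2_le_linear[rotated]) simp
qed

end
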